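(* Let $d\ge1$ and $K\ge2$ be integers and let $\mathbf W^\star\in\mathrm{OB}(d,K)$ be a Softmax Code, with columns $\mathbf w_1^\star,\dots,\mathbf w_K^\star$. Then: (1) If $d=2$, the points are uniformly distributed on the unit circle: $\{\mathbf w_k^\star\}=\{(\cos(2\pi k/K+\alpha),\sin(2\pi k/K+\alpha)):k\in[K]\}$ for some $\alpha\in\mathbb R$. (2) If $K\le d+1$, the columns form a simplex equiangular tight frame: $\langle\mathbf w_k^\star,\mathbf w_{k'}^\star\rangle=-\tfrac{1}{K-1}$ for all $k\ne k'$, i.e. $(\mathbf W^\star)^\top\mathbf W^\star=\tfrac{K}{K-1}\big(\mathbf I_K-\tfrac1K\mathbf 1_K\mathbf 1_K^\top\big)$. (3) If $d+1<K\le 2d$, then $\rho_{\text{one-vs-rest}}(\mathbf W^\star)=1$; this value is attained, for instance, when the columns are $K$ distinct vertices of the cross-polytope $\{\pm\mathbf e_1,\dots,\pm\mathbf e_d\}$.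
   Context: $\mathrm{OB}(d,K)$ is the set of real $d\times K$ matrices with unit-norm columns. For a point $\mathbf v$ and finite set $\mathcal W$, $\operatorname{dist}(\mathbf v,\mathcal W)=\inf\{\|\mathbf v-\mathbf w\|_2:\mathbf w\in\operatorname{conv}(\mathcal W)\}$. $\rho_{\text{one-vs-rest}}(\mathbf W)=\min_{k}\operatorname{dist}(\mathbf w_k,\{\mathbf w_j\}_{j\ne k})$. A Softmax Code is any $\mathbf W\in\operatorname{argmax}_{\mathbf W\in\mathrm{OB}(d,K)}\rho_{\text{one-vs-rest}}(\mathbf W)$. $\mathbf e_i$ are the standard basis vectors of $\mathbb R^d$. *)

theory Defs
  imports "HOL-Analysis.Analysis"
begin

text \<open>A configuration of K points W 0, ..., W (K-1) in R^d (the columns of W).\<close>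

definition oblique :: "nat \<Rightarrow> (nat \<Rightarrow> 'a::real_normed_vector) \<Rightarrow> bool" where
  "oblique K W \<longleftrightarrow> (\<forall>k<K. norm (W k) = 1)"

definition dist_conv :: "'a::euclidean_space \<Rightarrow> 'a set \<Rightarrow> real" where
  "dist_conv v S = infdist v (convex hull S)"

definition rho_ovr :: "nat \<Rightarrow> (nat \<Rightarrow> 'a::euclidean_space) \<Rightarrow> real" where
  "rho_ovr K W = (MIN k\<in>{..<K}. dist_conv (W k) (W ` ({..<K} - {k})))"

definition softmax_code :: "nat \<Rightarrow> (nat \<Rightarrow> 'a::euclidean_space) \<Rightarrow> bool" where
  "softmax_code K W \<longleftrightarrow> oblique K W \<and>
     (\<forall>V::nat \<Rightarrow> 'a. oblique K V \<longrightarrow> rho_ovr K V \<le> rho_ovr K W)"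

end

theory Submission
  imports Defs
begin

text \<open>
  If all pairwise inner products of a unit configuration are at most \<open>t\<close>, the convex hull of
  the other points lies in the half-space \<open>\<langle>w\<^sub>k, x\<rangle> \<le> t\<close>, so each one-vs-rest distance is at
  least \<open>1 - t\<close>. This gives the lower bounds \<open>1 - cos (2\<pi>/K)\<close> for the regular polygon,
  \<open>K/(K-1)\<close> for the simplex and \<open>1\<close> for the cross-polytope.

  For \<open>K \<ge> d + 2\<close> the points are affinely dependent; a Radon partition gives a point \<open>z\<close> in the
  hulls of both parts, and some point \<open>w\<^sub>k\<close> of the first part satisfies \<open>|w\<^sub>k - z| \<le> |w\<^sub>k| = 1\<close>.
  For \<open>K \<le> d + 1\<close>, the distance from \<open>w\<^sub>k\<close> to the centroid of the others is
  \<open>|K w\<^sub>k - S|/(K-1)\<close> with \<open>S = \<Sum> w\<^sub>j\<close>; summing the squares over \<open>k\<close> shows that the simplex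
  value \<open>K/(K-1)\<close> can only be reached if \<open>S = 0\<close>. Then the centroid is the nearest point of the
  hull, which forces \<open>\<langle>w\<^sub>k, w\<^sub>j\<rangle> \<le> -1/(K-1)\<close>, with equality since these inner products sum to \<open>-1\<close>.

  In the plane, write the points as \<open>(cos \<theta>\<^sub>i, sin \<theta>\<^sub>i)\<close> with increasing angles, extended
  periodically by \<open>\<theta> (i + K) = \<theta> i + 2\<pi>\<close>. If every point has distance at least \<open>c\<close> from the hull of the
  others, a unit vector separating a point from that hull gives
  \<open>c\<^sup>2 \<le> 4 sin (A/2) sin (B/2) sin\<^sup>2 ((A+B)/4)\<close> for the two gaps \<open>A\<close>, \<open>B\<close> adjacent to the point. For
  \<open>c = 1 - cos (2\<pi>/K) = 2 sin\<^sup>2 (\<pi>/K)\<close>, taking logarithms and applying Jensen's inequality to the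
  strictly concave \<open>ln \<circ> sin\<close> on \<open>(0, \<pi>)\<close> forces all gaps to be \<open>2\<pi>/K\<close>.
\<close>

section \<open>Separation from the convex hull of the other points\<close>

lemma rho_ovr_le_dist_conv:
  assumes "k < K"
  shows "rho_ovr K W \<le> dist_conv (W k) (W ` ({..<K} - {k}))"
  unfolding rho_ovr_def using assms by (intro Min_le) auto

lemma rho_ovr_le_dist:
  assumes "k < K" "p \<in> convex hull (W ` ({..<K} - {k}))"
  shows "rho_ovr K W \<le> dist (W k) p"
  using rho_ovr_le_dist_conv[OF assms(1), of W] infdist_le[OF assms(2), of "W k"]
  unfolding dist_conv_def by linarith

lemma rho_ovr_geI:
  assumes "0 < K" "\<And>k. k < K \<Longrightarrow> c \<le> dist_conv (W k) (W ` ({..<K} - {k}))"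
  shows "c \<le> rho_ovr K W"
  unfolding rho_ovr_def using assms by (subst Min_ge_iff) auto

lemma softmax_code_rho_ovr_ge:
  fixes W V :: "nat \<Rightarrow> 'a::euclidean_space"
  assumes "softmax_code K W" "oblique K V"
  shows "rho_ovr K V \<le> rho_ovr K W"
  using assms unfolding softmax_code_def by blast

lemma infdist_convex_hull_ge:
  fixes x :: "'a::euclidean_space"
  assumes "norm x = 1" "S \<noteq> {}" "\<And>y. y \<in> S \<Longrightarrow> inner x y \<le> t"
  shows "1 - t \<le> infdist x (convex hull S)"
proof -
  have hull_le: "convex hull S \<subseteq> {y. inner x y \<le> t}"
    using assms(3) by (intro hull_minimal) (auto simp: convex_halfspace_le)
  have "1 - t \<le> dist x y" if "y \<in> convex hull S" for y
  proof -
    have "inner x (x - y) \<le> norm x * norm (x - y)" by (rule norm_cauchy_schwarz)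
    moreover have "inner x x = 1" using assms(1) by (simp add: norm_eq_1)
    ultimately show ?thesis
      using hull_le that assms(1) by (auto simp: dist_norm inner_diff_right)
  qed
  then show ?thesis
    using assms(2) by (simp add: infdist_notempty cINF_greatest)
qed

lemma rho_ovr_ge_of_inner_le:
  fixes W :: "nat \<Rightarrow> 'a::euclidean_space"
  assumes "oblique K W" "2 \<le> K"
    and "\<And>k j. k < K \<Longrightarrow> j < K \<Longrightarrow> j \<noteq> k \<Longrightarrow> inner (W k) (W j) \<le> t"
  shows "1 - t \<le> rho_ovr K W"
proof (rule rho_ovr_geI)
  fix k assume k: "k < K"
  have "(if k = 0 then 1 else 0) \<in> {..<K} - {k}" using assms(2) by auto
  then have "W ` ({..<K} - {k}) \<noteq> {}" by blast
  moreover have "norm (W k) = 1" using assms(1) k by (simp add: oblique_def)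
  ultimately show "1 - t \<le> dist_conv (W k) (W ` ({..<K} - {k}))"
    unfolding dist_conv_def using assms(3) k by (intro infdist_convex_hull_ge) auto
qed (use assms(2) in simp)

lemma closest_point_convex_hull_inner_le:
  fixes x :: "'a::euclidean_space"
  assumes "finite S" "p \<in> convex hull S" "dist x p \<le> infdist x (convex hull S)" "y \<in> S"
  shows "inner (x - p) (y - p) \<le> 0"
proof (rule any_closest_point_dot[OF convex_convex_hull _ assms(2)])
  show "closed (convex hull S)"
    using assms(1) by (simp add: compact_imp_closed finite_imp_compact_convex_hull)
  show "y \<in> convex hull S" using assms(4) by (rule hull_inc)
  show "\<forall>z\<in>convex hull S. dist x p \<le> dist x z"
    using assms(3) infdist_le[of _ "convex hull S" x] by force
qed

lemma separating_unit_vector: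
  fixes x :: "'a::euclidean_space"
  assumes "finite S" "S \<noteq> {}" "0 < c" "c \<le> infdist x (convex hull S)"
  obtains u where "norm u = 1" "\<And>y. y \<in> S \<Longrightarrow> c \<le> inner u x - inner u y"
proof -
  have "closed (convex hull S)"
    using assms(1) by (simp add: compact_imp_closed finite_imp_compact_convex_hull)
  moreover have "convex hull S \<noteq> {}" using assms(2) by simp
  ultimately obtain p where p: "p \<in> convex hull S" "infdist x (convex hull S) = dist x p"
    using infdist_attains_inf by blast
  define r where "r = norm (x - p)"
  have "c \<le> r" using assms(4) p(2) by (simp add: r_def dist_norm)
  with assms(3) have r: "0 < r" "c \<le> r" by simp_all
  show ?thesis
  proof
    show "norm ((1 / r) *\<^sub>R (x - p)) = 1" using r(1) by (simp add: r_def[symmetric])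
    fix y assume "y \<in> S"
    then have "inner (x - p) (y - p) \<le> 0"
      using closest_point_convex_hull_inner_le[OF assms(1) p(1)] p(2) by simp
    moreover have "inner (x - p) (x - p) = r * r"
      by (simp add: r_def dot_square_norm power2_eq_square)
    ultimately have "r * r \<le> inner (x - p) x - inner (x - p) y"
      by (simp add: inner_diff_right inner_diff_left inner_commute)
    then have "r \<le> (inner (x - p) x - inner (x - p) y) / r"
      using r(1) by (simp add: pos_le_divide_eq)
    also have "\<dots> = inner ((1 / r) *\<^sub>R (x - p)) x - inner ((1 / r) *\<^sub>R (x - p)) y"
      by (simp add: diff_divide_distrib)
    finally show "c \<le> inner ((1 / r) *\<^sub>R (x - p)) x - inner ((1 / r) *\<^sub>R (x - p)) y"
      using r(2) by linarith
  qed
qed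

lemma convex_hull_ex_dist_le_norm:
  fixes z :: "'a::real_inner"
  assumes "z \<in> convex hull M"
  shows "\<exists>x\<in>M. dist x z \<le> norm x"
proof (rule ccontr)
  assume none: "\<not> ?thesis"
  have "inner z x < inner z z / 2" if "x \<in> M" for x
  proof (rule ccontr)
    assume "\<not> inner z x < inner z z / 2"
    moreover have "(dist x z)\<^sup>2 + 2 * inner z x = (norm x)\<^sup>2 + inner z z"
      by (simp add: dist_norm power2_norm_eq_inner inner_diff_left inner_diff_right
          inner_commute[of x z])
    ultimately have "(dist x z)\<^sup>2 \<le> (norm x)\<^sup>2" by linarith
    then have "dist x z \<le> norm x" by (rule power2_le_imp_le) simp
    with that none show False by blast
  qed
  then have "convex hull M \<subseteq> {x. inner z x < inner z z / 2}"
    by (intro hull_minimal subsetI convex_halfspace_lt) simp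
  with assms have "inner z z < inner z z / 2" by blast
  then show False using inner_ge_zero[of z] by linarith
qed

lemma inj_on_of_rho_ovr_pos:
  assumes "0 < rho_ovr K W"
  shows "inj_on W {..<K}"
proof (rule inj_onI, rule ccontr)
  fix k j assume kj: "k \<in> {..<K}" "j \<in> {..<K}" "W k = W j" "k \<noteq> j"
  then have "rho_ovr K W \<le> dist (W k) (W j)" by (intro rho_ovr_le_dist hull_inc) auto
  with assms kj(3) show False by simp
qed

lemma rho_ovr_le_infdist_remove:
  assumes "inj_on W {..<K}" "p \<in> W ` {..<K}"
  shows "rho_ovr K W \<le> infdist p (convex hull (W ` {..<K} - {p}))"
proof -
  obtain k where k: "k < K" "p = W k" using assms(2) by blast
  then have "W ` ({..<K} - {k}) = W ` {..<K} - {p}"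
    by (simp add: inj_on_image_set_diff[OF assms(1)])
  then show ?thesis using rho_ovr_le_dist_conv[OF k(1), of W] k by (simp add: dist_conv_def)
qed

section \<open>Radon bound and the cross-polytope\<close>

lemma rho_ovr_le_one:
  fixes W :: "nat \<Rightarrow> 'a::euclidean_space"
  assumes "oblique K W" "DIM('a) + 2 \<le> K"
  shows "rho_ovr K W \<le> 1"
proof (cases "inj_on W {..<K}")
  case False
  then have "\<not> 0 < rho_ovr K W" using inj_on_of_rho_ovr_pos by blast
  then show ?thesis by simp
next
  case True
  have fin: "finite (W ` {..<K})" by simp
  have "card (W ` {..<K}) = K" using True by (simp add: card_image)
  with assms(2) have "affine_dependent (W ` {..<K})"
    by (intro affine_dependent_biggerset[OF fin]) auto
  then obtain M P where MP: "M \<inter> P = {}" "M \<union> P = W ` {..<K}"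
      "convex hull M \<inter> convex hull P \<noteq> {}"
    using Radon_partition[OF fin] by blast
  then obtain z where z: "z \<in> convex hull M" "z \<in> convex hull P" by blast
  obtain x where x: "x \<in> M" "dist x z \<le> norm x"
    using convex_hull_ex_dist_le_norm[OF z(1)] by blast
  have "x \<in> W ` {..<K}" using MP(2) x(1) by blast
  then obtain k where k: "k < K" "W k = x" by blast
  have "P \<subseteq> W ` ({..<K} - {k})"
  proof
    fix y assume "y \<in> P"
    then obtain j where "j < K" "y = W j" using MP(2) by blast
    moreover have "y \<noteq> x" using MP(1) x(1) \<open>y \<in> P\<close> by blast
    ultimately show "y \<in> W ` ({..<K} - {k})" using k by blast
  qed
  then have "z \<in> convex hull (W ` ({..<K} - {k}))" using z(2) hull_mono by blast
  then have "rho_ovr K W \<le> dist (W k) z" by (rule rho_ovr_le_dist[OF k(1)])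
  also have "\<dots> \<le> norm (W k)" using x(2) k(2) by simp
  also have "\<dots> = 1" using k(1) assms(1) by (simp add: oblique_def)
  finally show ?thesis .
qed

definition cross_polytope_vertex :: "real^'n \<Rightarrow> bool" where
  "cross_polytope_vertex v \<longleftrightarrow> (\<exists>i. v = axis i 1 \<or> v = - axis i 1)"

lemma norm_cross_polytope_vertex:
  "cross_polytope_vertex v \<Longrightarrow> norm v = 1"
  by (auto simp: cross_polytope_vertex_def)

lemma inner_cross_polytope_vertices_le_0:
  assumes "cross_polytope_vertex v" "cross_polytope_vertex w" "v \<noteq> w"
  shows "inner v w \<le> 0"
  using assms by (auto simp: cross_polytope_vertex_def inner_axis_axis axis_eq_axis)

lemma card_cross_polytope_vertices:
  "card {v :: real^'n. cross_polytope_vertex v} = 2 * CARD('n)"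
proof -
  have vertices: "{v :: real^'n. cross_polytope_vertex v}
      = range (\<lambda>i. axis i 1) \<union> range (\<lambda>i. - axis i 1)"
    by (auto simp: cross_polytope_vertex_def)
  have "inj (\<lambda>i::'n. axis i (1::real))" "inj (\<lambda>i::'n. - axis i (1::real))"
    by (auto intro!: injI simp: axis_eq_axis)
  moreover have "axis i 1 \<noteq> - axis j (1::real)" for i j :: 'n
  proof
    assume "axis i 1 = - axis j (1::real)"
    then have "axis i 1 $ i = (- axis j (1::real)) $ i" by simp
    then show False by (simp add: axis_def split: if_splits)
  qed
  then have "range (\<lambda>i::'n. axis i (1::real)) \<inter> range (\<lambda>i. - axis i 1) = {}"
    by auto
  ultimately show ?thesis
    unfolding vertices by (simp add: card_Un_disjoint card_image)
qed

lemma ex_cross_polytope_configuration: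
  assumes "K \<le> 2 * CARD('n)"
  obtains V :: "nat \<Rightarrow> real^'n"
  where "inj_on V {..<K}" "\<And>k. k < K \<Longrightarrow> cross_polytope_vertex (V k)"
proof -
  have "finite {v :: real^'n. cross_polytope_vertex v}"
    by (rule finite_subset[of _ "range (\<lambda>i. axis i 1) \<union> range (\<lambda>i. - axis i 1)"])
      (auto simp: cross_polytope_vertex_def)
  with assms obtain V :: "nat \<Rightarrow> real^'n"
    where "V ` {..<K} \<subseteq> {v. cross_polytope_vertex v}" "inj_on V {..<K}"
    using card_le_inj[of "{..<K}" "{v. cross_polytope_vertex v}"]
    by (auto simp: card_cross_polytope_vertices)
  with that show ?thesis by blast
qed

lemma rho_ovr_cross_polytope:
  fixes V :: "nat \<Rightarrow> real^'n"
  assumes "inj_on V {..<K}" "\<And>k. k < K \<Longrightarrow> cross_polytope_vertex (V k)"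
    and "CARD('n) + 2 \<le> K"
  shows "rho_ovr K V = 1"
proof (rule antisym)
  have "oblique K V" using assms(2) by (simp add: oblique_def norm_cross_polytope_vertex)
  then show "rho_ovr K V \<le> 1" using assms(3) by (intro rho_ovr_le_one) auto
  have "1 - 0 \<le> rho_ovr K V"
  proof (rule rho_ovr_ge_of_inner_le[OF \<open>oblique K V\<close>])
    fix k j assume "k < K" "j < K" "j \<noteq> k"
    then show "inner (V k) (V j) \<le> 0"
      using assms(1,2) by (intro inner_cross_polytope_vertices_le_0) (auto dest: inj_onD)
  qed (use assms(3) in simp)
  then show "1 \<le> rho_ovr K V" by simp
qed

lemma softmax_code_rho_ovr_eq_one:
  fixes W :: "nat \<Rightarrow> real^'n"
  assumes "softmax_code K W" "CARD('n) + 2 \<le> K" "K \<le> 2 * CARD('n)"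
  shows "rho_ovr K W = 1"
proof (rule antisym)
  show "rho_ovr K W \<le> 1"
    using assms(1,2) by (intro rho_ovr_le_one) (auto simp: softmax_code_def)
  obtain V :: "nat \<Rightarrow> real^'n"
    where V: "inj_on V {..<K}" "\<And>k. k < K \<Longrightarrow> cross_polytope_vertex (V k)"
    using ex_cross_polytope_configuration[OF assms(3)] by blast
  then have "oblique K V" by (simp add: oblique_def norm_cross_polytope_vertex)
  then have "rho_ovr K V \<le> rho_ovr K W" by (rule softmax_code_rho_ovr_ge[OF assms(1)])
  then show "1 \<le> rho_ovr K W" using rho_ovr_cross_polytope[OF V assms(2)] by simp
qed

section \<open>Simplex equiangular tight frames\<close>

lemma simplex_coefficients:
  fixes m :: real
  assumes "0 < m"
  obtains \<alpha> \<beta> \<gamma> where "\<alpha> * \<alpha> - 2 * \<alpha> * \<beta> + \<beta> * \<beta> * m = 1"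
    "- 2 * \<alpha> * \<beta> + \<beta> * \<beta> * m = - 1 / m" "\<gamma> * (\<alpha> - \<beta> * m) = - 1 / m" "\<gamma> * \<gamma> * m = 1"
proof
  define \<alpha> \<gamma> where "\<alpha> = sqrt (1 + 1 / m)" and "\<gamma> = sqrt (1 / m)"
  have \<alpha>\<alpha>: "\<alpha> * \<alpha> = 1 + 1 / m" and \<gamma>\<gamma>: "\<gamma> * \<gamma> = 1 / m"
    using assms by (simp_all add: \<alpha>_def \<gamma>_def)
  have "- 2 * \<alpha> * ((\<alpha> + \<gamma>) / m) + ((\<alpha> + \<gamma>) / m) * ((\<alpha> + \<gamma>) / m) * m
      = (\<gamma> + \<alpha>) * (\<gamma> - \<alpha>) / m"
    using assms by (simp add: field_simps)
  also have "\<dots> = (\<gamma> * \<gamma> - \<alpha> * \<alpha>) / m" by (simp add: algebra_simps)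
  also have "\<dots> = - 1 / m" by (simp add: \<alpha>\<alpha> \<gamma>\<gamma>)
  finally show "- 2 * \<alpha> * ((\<alpha> + \<gamma>) / m) + ((\<alpha> + \<gamma>) / m) * ((\<alpha> + \<gamma>) / m) * m = - 1 / m" .
  then show "\<alpha> * \<alpha> - 2 * \<alpha> * ((\<alpha> + \<gamma>) / m) + ((\<alpha> + \<gamma>) / m) * ((\<alpha> + \<gamma>) / m) * m = 1"
    using \<alpha>\<alpha> by simp
  have "(\<alpha> + \<gamma>) / m * m = \<alpha> + \<gamma>" using assms by simp
  then show "\<gamma> * (\<alpha> - (\<alpha> + \<gamma>) / m * m) = - 1 / m" using \<gamma>\<gamma> by simp
  show "\<gamma> * \<gamma> * m = 1" using assms \<gamma>\<gamma> by simp
qed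

lemma orthonormal_to_simplex:
  fixes e :: "nat \<Rightarrow> 'a::real_inner"
  assumes "1 \<le> m" "\<And>i j. i < m \<Longrightarrow> j < m \<Longrightarrow> inner (e i) (e j) = (if i = j then 1 else 0)"
  obtains E :: "nat \<Rightarrow> 'a" where "\<And>k j. k \<le> m \<Longrightarrow> j \<le> m \<Longrightarrow>
    inner (E k) (E j) = (if k = j then 1 else - 1 / real m)"
proof -
  define u where "u = (\<Sum>j<m. e j)"
  have eu: "inner (e i) u = 1" "inner u (e i) = 1" if "i < m" for i
    using that assms(2) by (simp_all add: u_def inner_sum_right inner_sum_left)
  have "inner u u = (\<Sum>j<m. inner (e j) u)"
    unfolding u_def by (rule inner_sum_left)
  also have "\<dots> = real m" using eu(1) by simp
  finally have uu: "inner u u = real m" .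
  obtain \<alpha> \<beta> \<gamma> where \<alpha>\<beta>: "\<alpha> * \<alpha> - 2 * \<alpha> * \<beta> + \<beta> * \<beta> * real m = 1"
    and \<alpha>\<beta>': "- 2 * \<alpha> * \<beta> + \<beta> * \<beta> * real m = - 1 / real m"
    and \<alpha>\<beta>\<gamma>: "\<gamma> * (\<alpha> - \<beta> * real m) = - 1 / real m"
    and \<gamma>: "\<gamma> * \<gamma> * real m = 1"
    using simplex_coefficients[of "real m"] assms(1) by auto
  define E where "E k = (if k < m then \<alpha> *\<^sub>R e k - \<beta> *\<^sub>R u else \<gamma> *\<^sub>R u)" for k
  have EE: "inner (E k) (E j) = (if k = j then 1 else - 1 / real m)"
    if kj: "k \<le> m" "j \<le> m" "k \<le> j" for k j
  proof (cases "j < m")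
    case True
    then have "k < m" using kj by simp
    with True show ?thesis
      using \<alpha>\<beta> \<alpha>\<beta>' assms(2)[of k j]
      by (simp add: E_def inner_diff_left inner_diff_right eu uu algebra_simps)
  next
    case False
    then have "j = m" using kj by simp
    then show ?thesis
      using \<alpha>\<beta>\<gamma> \<gamma> kj by (cases "k < m") (simp_all add: E_def inner_diff_left eu uu algebra_simps)
  qed
  show ?thesis
  proof (rule that)
    fix k j assume "k \<le> m" "j \<le> m"
    then show "inner (E k) (E j) = (if k = j then 1 else - 1 / real m)"
      using EE[of k j] EE[of j k] by (cases "k \<le> j") (auto simp: inner_commute)
  qed
qed

lemma ex_simplex_etf:
  assumes "2 \<le> K" "K \<le> CARD('n) + 1"
  obtains E :: "nat \<Rightarrow> real^'n"
  where "oblique K E" "\<And>k j. k < K \<Longrightarrow> j < K \<Longrightarrow> j \<noteq> k \<Longrightarrow> inner (E k) (E j) = - 1 / (real K - 1)"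
proof -
  have "card {..<K - 1} \<le> card (UNIV :: 'n set)" using assms(2) by simp
  then obtain f :: "nat \<Rightarrow> 'n" where f: "inj_on f {..<K - 1}"
    using card_le_inj[of "{..<K - 1}" "UNIV :: 'n set"] by auto
  have "inner (axis (f i) 1) (axis (f j) 1 :: real^'n) = (if i = j then 1 else 0)"
    if "i < K - 1" "j < K - 1" for i j
    using f that by (auto simp: inner_axis_axis dest: inj_onD)
  moreover have "1 \<le> K - 1" using assms(1) by simp
  ultimately obtain E :: "nat \<Rightarrow> real^'n"
    where E: "\<And>k j. k \<le> K - 1 \<Longrightarrow> j \<le> K - 1 \<Longrightarrow>
      inner (E k) (E j) = (if k = j then 1 else - 1 / real (K - 1))"
    using orthonormal_to_simplex[of "K - 1" "\<lambda>i. axis (f i) 1"] by blast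
  show ?thesis
  proof (rule that)
    show "oblique K E" unfolding oblique_def using E by (simp add: norm_eq_1)
    fix k j assume "k < K" "j < K" "j \<noteq> k"
    then show "inner (E k) (E j) = - 1 / (real K - 1)"
      using E[of k j] assms(1) by (simp add: of_nat_diff)
  qed
qed

lemma convex_hull_mean:
  assumes "finite I" "I \<noteq> {}"
  shows "(1 / real (card I)) *\<^sub>R (\<Sum>i\<in>I. f i) \<in> convex hull (f ` I)"
  unfolding scaleR_sum_right
  by (rule convex_sum) (use assms in \<open>auto intro: hull_inc\<close>)

lemma centroid_of_others_in_convex_hull:
  fixes W :: "nat \<Rightarrow> 'a::real_vector"
  assumes "2 \<le> K" "k < K"
  shows "(1 / (real K - 1)) *\<^sub>R ((\<Sum>j<K. W j) - W k) \<in> convex hull (W ` ({..<K} - {k}))"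
proof -
  have "(if k = 0 then 1 else 0) \<in> {..<K} - {k}" using assms by auto
  then have "{..<K} - {k} \<noteq> {}" by blast
  with assms show ?thesis
    using convex_hull_mean[of "{..<K} - {k}" W] by (simp add: sum_diff1 of_nat_diff)
qed

lemma sum_eq_0_of_rho_ovr_ge:
  fixes W :: "nat \<Rightarrow> 'a::euclidean_space"
  assumes "oblique K W" "2 \<le> K" "1 + 1 / (real K - 1) \<le> rho_ovr K W"
  shows "(\<Sum>j<K. W j) = 0"
proof -
  define S R where "S = (\<Sum>j<K. W j)" and "R = real K"
  have R: "2 \<le> R" using assms(2) by (simp add: R_def)
  have far: "R * R \<le> R * R - 2 * R * inner (W k) S + inner S S" if k: "k < K" for k
  proof -
    define p where "p = (1 / (R - 1)) *\<^sub>R (S - W k)"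
    have "W k - p = (1 / (R - 1)) *\<^sub>R ((R - 1) *\<^sub>R W k - (S - W k))"
      using R by (simp add: p_def scaleR_diff_right)
    also have "(R - 1) *\<^sub>R W k - (S - W k) = R *\<^sub>R W k - S"
      by (simp add: algebra_simps)
    finally have "dist (W k) p = norm (R *\<^sub>R W k - S) / (R - 1)"
      using R by (simp add: dist_norm)
    moreover have "rho_ovr K W \<le> dist (W k) p"
      unfolding p_def S_def R_def
      by (rule rho_ovr_le_dist[OF k centroid_of_others_in_convex_hull[OF assms(2) k]])
    ultimately have "1 + 1 / (R - 1) \<le> norm (R *\<^sub>R W k - S) / (R - 1)"
      using assms(3) by (simp add: R_def)
    then have "(1 + 1 / (R - 1)) * (R - 1) \<le> norm (R *\<^sub>R W k - S)"
      using R by (subst (asm) pos_le_divide_eq) auto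
    moreover have "(1 + 1 / (R - 1)) * (R - 1) = R" using R by (simp add: field_simps)
    ultimately have "R \<le> norm (R *\<^sub>R W k - S)" by simp
    then have "R * R \<le> (norm (R *\<^sub>R W k - S))\<^sup>2"
      using R by (simp add: power2_eq_square mult_mono)
    also have "\<dots> = R * R * inner (W k) (W k) - 2 * R * inner (W k) S + inner S S"
      by (simp add: power2_norm_eq_inner inner_diff_left inner_diff_right inner_commute
          algebra_simps)
    finally show ?thesis using assms(1) k by (simp add: oblique_def norm_eq_1)
  qed
  have "(\<Sum>k<K. R * R) \<le> (\<Sum>k<K. R * R - 2 * R * inner (W k) S + inner S S)"
    by (rule sum_mono) (use far in auto)
  also have "\<dots> = R * R * R - 2 * R * inner S S + R * inner S S"
    by (simp add: sum.distrib sum_subtractf flip: sum_distrib_left inner_sum_left S_def)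
      (simp add: R_def)
  finally have "R * inner S S \<le> 0" by (simp add: R_def)
  then have "inner S S \<le> 0" using R by (simp add: mult_le_0_iff)
  then show ?thesis unfolding S_def using inner_ge_zero order_antisym by fastforce
qed

lemma inner_le_of_rho_ovr_ge:
  fixes W :: "nat \<Rightarrow> 'a::euclidean_space"
  assumes "oblique K W" "2 \<le> K" "1 + 1 / (real K - 1) \<le> rho_ovr K W"
    and "k < K" "j < K" "j \<noteq> k"
  shows "inner (W k) (W j) \<le> - 1 / (real K - 1)"
proof -
  define r where "r = 1 + 1 / (real K - 1)"
  have r: "0 < r" using assms(2) by (simp add: r_def add_pos_nonneg)
  define p where "p = - (1 / (real K - 1)) *\<^sub>R W k"
  have "p \<in> convex hull (W ` ({..<K} - {k}))"
    using centroid_of_others_in_convex_hull[OF assms(2,4), of W]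
    by (simp add: sum_eq_0_of_rho_ovr_ge[OF assms(1-3)] p_def)
  moreover have "W k - p = r *\<^sub>R W k" by (simp add: p_def r_def algebra_simps)
  then have "dist (W k) p = r" using assms(1,4) r by (simp add: dist_norm oblique_def)
  then have "dist (W k) p \<le> infdist (W k) (convex hull (W ` ({..<K} - {k})))"
    using assms(3) rho_ovr_le_dist_conv[OF assms(4), of W] by (simp add: r_def dist_conv_def)
  ultimately have "inner (W k - p) (W j - p) \<le> 0"
    using assms(4-6) by (intro closest_point_convex_hull_inner_le) auto
  also have "inner (W k - p) (W j - p) = r * (inner (W k) (W j) + 1 / (real K - 1))"
    using \<open>W k - p = r *\<^sub>R W k\<close> assms(1,4)
    by (simp add: p_def inner_diff_right algebra_simps oblique_def norm_eq_1)
  finally show ?thesis using r by (simp add: mult_le_0_iff)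
qed

lemma inner_eq_of_rho_ovr_ge:
  fixes W :: "nat \<Rightarrow> 'a::euclidean_space"
  assumes "oblique K W" "2 \<le> K" "1 + 1 / (real K - 1) \<le> rho_ovr K W"
    and "k < K" "j < K" "j \<noteq> k"
  shows "inner (W k) (W j) = - 1 / (real K - 1)"
proof -
  let ?d = "\<lambda>i. - 1 / (real K - 1) - inner (W k) (W i)"
  have "(\<Sum>i\<in>{..<K} - {k}. inner (W k) (W i)) = inner (W k) ((\<Sum>i<K. W i) - W k)"
    using assms(4) by (simp add: inner_sum_right sum_diff1 inner_diff_right)
  also have "\<dots> = -1"
    using assms(1,4) by (simp add: sum_eq_0_of_rho_ovr_ge[OF assms(1-3)] oblique_def norm_eq_1)
  finally have "(\<Sum>i\<in>{..<K} - {k}. ?d i) = 0"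
    using assms(2,4) by (simp add: sum_subtractf of_nat_diff)
  moreover have "\<forall>i\<in>{..<K} - {k}. 0 \<le> ?d i"
    using inner_le_of_rho_ovr_ge[OF assms(1-4)] by auto
  ultimately have "?d j = 0"
    using assms(5,6) by (subst (asm) sum_nonneg_eq_0_iff) auto
  then show ?thesis by simp
qed

lemma rho_ovr_simplex_etf:
  fixes E :: "nat \<Rightarrow> 'a::euclidean_space"
  assumes "oblique K E" "2 \<le> K"
    and "\<And>k j. k < K \<Longrightarrow> j < K \<Longrightarrow> j \<noteq> k \<Longrightarrow> inner (E k) (E j) = - 1 / (real K - 1)"
  shows "1 + 1 / (real K - 1) \<le> rho_ovr K E"
  using rho_ovr_ge_of_inner_le[OF assms(1,2), of "- 1 / (real K - 1)"] assms(3) by simp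

lemma softmax_code_inner_eq:
  fixes W :: "nat \<Rightarrow> real^'n"
  assumes "softmax_code K W" "2 \<le> K" "K \<le> CARD('n) + 1"
    and "k < K" "j < K" "j \<noteq> k"
  shows "inner (W k) (W j) = - 1 / (real K - 1)"
proof (rule inner_eq_of_rho_ovr_ge[OF _ assms(2) _ assms(4-6)])
  show "oblique K W" using assms(1) by (simp add: softmax_code_def)
  obtain E :: "nat \<Rightarrow> real^'n" where "oblique K E"
    "\<And>k j. k < K \<Longrightarrow> j < K \<Longrightarrow> j \<noteq> k \<Longrightarrow> inner (E k) (E j) = - 1 / (real K - 1)"
    using ex_simplex_etf[OF assms(2,3)] by blast
  then have "1 + 1 / (real K - 1) \<le> rho_ovr K E" by (intro rho_ovr_simplex_etf assms(2))
  also have "\<dots> \<le> rho_ovr K W" by (rule softmax_code_rho_ovr_ge[OF assms(1) \<open>oblique K E\<close>])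
  finally show "1 + 1 / (real K - 1) \<le> rho_ovr K W" .
qed

section \<open>Configurations on the unit circle\<close>

definition circle_point :: "real \<Rightarrow> real^2" where
  "circle_point t = vector [cos t, sin t]"

lemma inner_circle_point: "inner (circle_point s) (circle_point t) = cos (s - t)"
  by (simp add: circle_point_def inner_vec_def sum_2 cos_diff)

lemma norm_circle_point [simp]: "norm (circle_point t) = 1"
  by (simp add: norm_eq_1 inner_circle_point)

lemma circle_point_eq_iff:
  "circle_point s = circle_point t \<longleftrightarrow> (\<exists>n::int. s = t + 2 * pi * n)"
  by (auto simp: circle_point_def vec_eq_iff forall_2 simp flip: sin_cos_eq_iff)

lemma circle_point_add_2pi [simp]: "circle_point (t + 2 * pi) = circle_point t"
  using circle_point_eq_iff[of "t + 2 * pi" t] by (metis mult.right_neutral of_int_1)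

lemma circle_point_inj:
  assumes "\<bar>s - t\<bar> < 2 * pi" "circle_point s = circle_point t"
  shows "s = t"
proof -
  obtain n :: int where n: "s - t = 2 * pi * n" using assms(2) circle_point_eq_iff by auto
  with assms(1) have "\<bar>real_of_int n\<bar> < 1" by (simp add: abs_mult)
  then have "n = 0" by linarith
  with n show ?thesis by simp
qed

lemma unit_vector_eq_circle_point:
  fixes v :: "real^2"
  assumes "norm v = 1"
  obtains t where "0 \<le> t" "t < 2 * pi" "v = circle_point t"
proof -
  have "(v$1)\<^sup>2 + (v$2)\<^sup>2 = 1"
    using assms by (simp add: norm_eq_1 inner_vec_def sum_2 power2_eq_square)
  then obtain t where "0 \<le> t" "t < 2 * pi" "v$1 = cos t" "v$2 = sin t"
    using sincos_total_2pi by metis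
  moreover from this have "v = circle_point t"
    by (simp add: circle_point_def vec_eq_iff forall_2)
  ultimately show ?thesis using that by blast
qed

lemma sorted_enumeration:
  fixes A :: "'a::linorder set"
  assumes "finite A"
  obtains x where "A = x ` {..<card A}" "\<And>i j. i < j \<Longrightarrow> j < card A \<Longrightarrow> x i < x j"
proof
  define xs where "xs = sorted_list_of_set A"
  have len: "length xs = card A" using assms by (simp add: xs_def)
  have "set xs = A" using assms by (simp add: xs_def)
  moreover have "set xs = (\<lambda>i. xs ! i) ` {..<length xs}"
    by (auto simp: in_set_conv_nth image_iff)
  ultimately show "A = (\<lambda>i. xs ! i) ` {..<card A}"
    by (simp add: len)
  show "xs ! i < xs ! j" if "i < j" "j < card A" for i j
    using sorted_wrt_nth_less[of "(<)" xs i j] that len by (simp add: xs_def)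
qed

lemma periodic_strict_mono_extension:
  fixes x :: "nat \<Rightarrow> real"
  assumes "0 < K" "\<And>i j. i < j \<Longrightarrow> j < K \<Longrightarrow> x i < x j" "x (K - 1) < x 0 + T"
  obtains \<theta> where "strict_mono \<theta>" "\<And>i. \<theta> (i + K) = \<theta> i + T" "\<And>i. i < K \<Longrightarrow> \<theta> i = x i"
proof
  define \<theta> where "\<theta> i = x (i mod K) + T * real (i div K)" for i
  show "\<theta> (i + K) = \<theta> i + T" for i
    using assms(1) by (simp add: \<theta>_def algebra_simps)
  show "\<theta> i = x i" if "i < K" for i
    using that by (simp add: \<theta>_def)
  show "strict_mono \<theta>"
    unfolding strict_mono_Suc_iff
  proof
    fix n
    have "n mod K < K" using assms(1) by simp
    show "\<theta> n < \<theta> (Suc n)"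
    proof (cases "Suc (n mod K) = K")
      case True
      then have "n mod K = K - 1" by simp
      with True show ?thesis using assms(3) by (simp add: \<theta>_def mod_Suc div_Suc algebra_simps)
    next
      case False
      with \<open>n mod K < K\<close> show ?thesis using assms(2) by (simp add: \<theta>_def mod_Suc div_Suc)
    qed
  qed
qed

lemma below_tangent_of_deriv_decreasing:
  fixes f f' :: "real \<Rightarrow> real"
  assumes deriv: "\<And>x. a < x \<Longrightarrow> x < b \<Longrightarrow> (f has_real_derivative f' x) (at x)"
    and decr: "\<And>x y. a < x \<Longrightarrow> x < y \<Longrightarrow> y < b \<Longrightarrow> f' y < f' x"
    and "a < x0" "x0 < b" "a < y" "y < b" "y \<noteq> x0"
  shows "f y < f x0 + f' x0 * (y - x0)"
proof (cases "y < x0")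
  case True
  obtain z where z: "y < z" "z < x0" "f x0 - f y = (x0 - y) * f' z"
    using MVT2[OF True, of f f'] deriv assms(3-6) by force
  have "(x0 - y) * f' x0 < (x0 - y) * f' z"
    using True z assms(4,5) by (intro mult_strict_left_mono decr) auto
  with z(3) show ?thesis by (simp add: algebra_simps)
next
  case False
  with assms(7) have "x0 < y" by simp
  then obtain z where z: "x0 < z" "z < y" "f y - f x0 = (y - x0) * f' z"
    using MVT2[of x0 y f f'] deriv assms(3-6) by force
  have "(y - x0) * f' z < (y - x0) * f' x0"
    using \<open>x0 < y\<close> z assms(3,6) by (intro mult_strict_left_mono decr) auto
  with z(3) show ?thesis by (simp add: algebra_simps)
qed

lemma ln_sin_below_tangent:
  assumes "0 < x0" "x0 < pi" "0 < y" "y < pi" "y \<noteq> x0"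
  shows "ln (sin y) < ln (sin x0) + cot x0 * (y - x0)"
proof (rule below_tangent_of_deriv_decreasing[where a = 0 and b = pi])
  fix x assume "0 < x" "x < pi"
  then have "0 < sin x" by (rule sin_gt_zero)
  then show "((\<lambda>x. ln (sin x)) has_real_derivative cot x) (at x)"
    by (auto intro!: derivative_eq_intros simp: cot_def field_simps)
next
  fix x y :: real assume "0 < x" "x < y" "y < pi"
  then have "0 < sin x" "0 < sin y" "0 < sin (y - x)" by (auto intro: sin_gt_zero)
  then show "cot y < cot x"
    by (simp add: cot_def sin_diff divide_simps algebra_simps)
qed (use assms in auto)

lemma ln_sin_le_tangent:
  assumes "0 < x0" "x0 < pi" "0 < y" "y < pi"
  shows "ln (sin y) \<le> ln (sin x0) + cot x0 * (y - x0)"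
  using ln_sin_below_tangent[OF assms] by (cases "y = x0") auto

lemma cos_le_cos_between:
  assumes "0 \<le> a" "a \<le> pi" "a \<le> y" "y \<le> 2 * pi - a"
  shows "cos y \<le> cos a"
proof (cases "y \<le> pi")
  case True
  with assms show ?thesis by (intro cos_monotone_0_pi_le) auto
next
  case False
  have "cos y = cos (2 * pi - y)" by (simp add: cos_diff)
  also have "\<dots> \<le> cos a" using False assms by (intro cos_monotone_0_pi_le) auto
  finally show ?thesis .
qed

lemma rho_ovr_regular_polygon:
  assumes "2 \<le> K"
  shows "1 - cos (2 * pi / real K) \<le> rho_ovr K (\<lambda>k. circle_point (2 * pi * real k / real K))"
proof (rule rho_ovr_ge_of_inner_le)
  show "oblique K (\<lambda>k. circle_point (2 * pi * real k / real K))" by (simp add: oblique_def)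
  fix k j assume kj: "k < K" "j < K" "j \<noteq> k"
  define n where "n = (if j < k then k - j else j - k)"
  have n: "1 \<le> real n" "real n \<le> real K - 1" using kj by (auto simp: n_def)
  have "inner (circle_point (2 * pi * real k / real K)) (circle_point (2 * pi * real j / real K))
      = cos (2 * pi * real n / real K)"
  proof (cases "j < k")
    case True
    then show ?thesis
      by (simp add: inner_circle_point n_def of_nat_diff diff_divide_distrib right_diff_distrib)
  next
    case False
    then have "2 * pi * real k / real K - 2 * pi * real j / real K = - (2 * pi * real n / real K)"
      by (simp add: n_def of_nat_diff diff_divide_distrib right_diff_distrib)
    then show ?thesis by (simp add: inner_circle_point)
  qed
  also have "\<dots> \<le> cos (2 * pi / real K)"
  proof (rule cos_le_cos_between)
    show "2 * pi / real K \<le> 2 * pi * real n / real K" "2 * pi / real K \<le> pi"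
      using n assms by (simp_all add: divide_right_mono field_simps)
    have "2 * pi * n \<le> 2 * pi * (real K - 1)" using n(2) by simp
    then show "2 * pi * real n / real K \<le> 2 * pi - 2 * pi / real K" using assms by (simp add: field_simps)
  qed simp
  finally show "inner (circle_point (2 * pi * real k / real K)) (circle_point (2 * pi * real j / real K))
      \<le> cos (2 * pi / real K)" .
qed (use assms in simp)

lemma neg_sin_mult_sin_le:
  fixes u v :: real
  shows "- sin u * sin v \<le> (sin ((v - u) / 2))\<^sup>2"
proof -
  have "- sin u * sin v = (cos (u + v) - cos (u - v)) / 2"
    by (simp add: cos_add cos_diff)
  also have "\<dots> \<le> (1 - cos (v - u)) / 2"
    using cos_le_one[of "u + v"] cos_minus[of "v - u"] by simp
  also have "cos (v - u) = cos (2 * ((v - u) / 2))"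
    by (rule arg_cong[where f = cos]) simp
  also have "(1 - cos (2 * ((v - u) / 2))) / 2 = (sin ((v - u) / 2))\<^sup>2"
    by (simp only: cos_double_sin) simp
  finally show ?thesis .
qed

lemma cos_diff_product_bound:
  assumes "0 < c" "0 < A" "A < 2 * pi" "0 < B" "B < 2 * pi"
    and "c \<le> cos \<phi> - cos (\<phi> - A)" "c \<le> cos \<phi> - cos (\<phi> + B)"
  shows "c * c \<le> 4 * sin (A / 2) * sin (B / 2) * (sin ((A + B) / 4))\<^sup>2"
proof -
  have left: "cos \<phi> - cos (\<phi> - A) = 2 * sin (A / 2) * - sin (\<phi> - A / 2)"
  proof -
    have "cos \<phi> = cos ((\<phi> - A / 2) + A / 2)" "cos (\<phi> - A) = cos ((\<phi> - A / 2) - A / 2)"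
      by simp_all
    then show ?thesis by (simp only: cos_add cos_diff) (simp add: algebra_simps)
  qed
  have right: "cos \<phi> - cos (\<phi> + B) = 2 * sin (B / 2) * sin (\<phi> + B / 2)"
  proof -
    have "cos \<phi> = cos ((\<phi> + B / 2) - B / 2)" "cos (\<phi> + B) = cos ((\<phi> + B / 2) + B / 2)"
      by (simp_all add: add.assoc)
    then show ?thesis by (simp only: cos_add cos_diff) (simp add: algebra_simps)
  qed
  have sA: "0 < sin (A / 2)" and sB: "0 < sin (B / 2)"
    using assms(2-5) by (auto intro: sin_gt_zero)
  have arg: "(\<phi> + B / 2 - (\<phi> - A / 2)) / 2 = (A + B) / 4" by (simp add: field_simps)
  have prod: "- sin (\<phi> - A / 2) * sin (\<phi> + B / 2) \<le> (sin ((A + B) / 4))\<^sup>2"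
    using neg_sin_mult_sin_le[of "\<phi> - A / 2" "\<phi> + B / 2"] unfolding arg .
  have "c * c \<le> (cos \<phi> - cos (\<phi> - A)) * (cos \<phi> - cos (\<phi> + B))"
    using assms(1,6,7) by (intro mult_mono) auto
  also have "\<dots> = 4 * sin (A / 2) * sin (B / 2) * (- sin (\<phi> - A / 2) * sin (\<phi> + B / 2))"
    by (simp add: left right)
  also have "\<dots> \<le> 4 * sin (A / 2) * sin (B / 2) * (sin ((A + B) / 4))\<^sup>2"
    using prod sA sB by (intro mult_left_mono) auto
  finally show ?thesis .
qed

lemma circle_neighbours_gap_bound:
  assumes "finite S" "0 < c" "c \<le> infdist (circle_point \<theta>) (convex hull S)"
    and "circle_point (\<theta> - A) \<in> S" "circle_point (\<theta> + B) \<in> S"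
    and "0 < A" "A < 2 * pi" "0 < B" "B < 2 * pi"
  shows "c * c \<le> 4 * sin (A / 2) * sin (B / 2) * (sin ((A + B) / 4))\<^sup>2"
proof -
  have "S \<noteq> {}" using assms(4) by blast
  then obtain u where u: "norm u = 1" "\<And>y. y \<in> S \<Longrightarrow> c \<le> inner u (circle_point \<theta>) - inner u y"
    using separating_unit_vector[OF assms(1) _ assms(2,3)] by blast
  obtain \<beta> where \<beta>: "u = circle_point \<beta>" using unit_vector_eq_circle_point[OF u(1)] by blast
  have "inner u (circle_point t) = cos (t - \<beta>)" for t
    using cos_minus[of "t - \<beta>"] by (simp add: \<beta> inner_circle_point)
  then show ?thesis
    using u(2)[OF assms(4)] u(2)[OF assms(5)] assms(2,6-9)
    by (intro cos_diff_product_bound[where \<phi> = "\<theta> - \<beta>"]) (simp_all add: algebra_simps)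
qed

lemma sum_ln_sin_less:
  assumes "finite I" "\<And>i. i \<in> I \<Longrightarrow> 0 < b i \<and> b i < pi" "(\<Sum>i\<in>I. b i) = pi"
    and "j \<in> I" "b j \<noteq> pi / real (card I)"
  shows "(\<Sum>i\<in>I. ln (sin (b i))) < real (card I) * ln (sin (pi / real (card I)))"
proof -
  define s where "s = pi / real (card I)"
  have "card I \<noteq> 1"
  proof
    assume "card I = 1"
    then have "I = {j}" using assms(4) by (auto simp: card_1_singleton_iff)
    then show False using assms(2-4) by simp
  qed
  moreover have "card I \<noteq> 0" using assms(1,4) by auto
  ultimately have s: "0 < s" "s < pi" by (auto simp: s_def field_simps)
  have "(\<Sum>i\<in>I. ln (sin (b i))) < (\<Sum>i\<in>I. ln (sin s) + cot s * (b i - s))"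
  proof (rule sum_strict_mono_ex1[OF assms(1)])
    show "\<forall>i\<in>I. ln (sin (b i)) \<le> ln (sin s) + cot s * (b i - s)"
      using assms(2) s by (auto intro: ln_sin_le_tangent)
    show "\<exists>i\<in>I. ln (sin (b i)) < ln (sin s) + cot s * (b i - s)"
      using assms(2,4,5) s by (auto simp: s_def intro!: bexI[of _ j] ln_sin_below_tangent)
  qed
  also have "\<dots> = real (card I) * ln (sin s) + cot s * ((\<Sum>i\<in>I. b i) - real (card I) * s)"
    by (simp add: sum.distrib sum_subtractf sum_distrib_left algebra_simps)
  also have "\<dots> = real (card I) * ln (sin s)"
    using \<open>card I \<noteq> 0\<close> by (simp add: assms(3) s_def)
  finally show ?thesis by (simp add: s_def)
qed

lemma sum_ln_sin_le:
  assumes "finite I" "\<And>i. i \<in> I \<Longrightarrow> 0 < b i \<and> b i < pi" "(\<Sum>i\<in>I. b i) = pi"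
  shows "(\<Sum>i\<in>I. ln (sin (b i))) \<le> real (card I) * ln (sin (pi / real (card I)))"
proof (cases "\<exists>j\<in>I. b j \<noteq> pi / real (card I)")
  case True
  then show ?thesis using sum_ln_sin_less[OF assms] by fastforce
qed simp

lemma ln_sin_form_of_gap_bound:
  assumes "0 < s" "s < pi" "0 < A" "A < 2 * pi" "0 < B" "B < 2 * pi"
    and "(2 * (sin s)\<^sup>2) * (2 * (sin s)\<^sup>2)
      \<le> 4 * sin (A / 2) * sin (B / 2) * (sin ((A + B) / 4))\<^sup>2"
  shows "4 * ln (sin s) \<le> ln (sin (A / 2)) + ln (sin (B / 2)) + 2 * ln (sin ((A + B) / 4))"
proof -
  have pos: "0 < sin s" "0 < sin (A / 2)" "0 < sin (B / 2)" "0 < sin ((A + B) / 4)"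
    using assms(1-6) by (auto intro!: sin_gt_zero)
  have "ln (4 * sin s ^ 4) \<le> ln (4 * sin (A / 2) * sin (B / 2) * (sin ((A + B) / 4))\<^sup>2)"
    using assms(7) pos by (subst ln_le_cancel_iff) (auto simp: power4_eq_xxxx power2_eq_square)
  then show ?thesis
    using pos by (simp add: ln_mult ln_realpow)
qed

lemma equal_gaps_of_ln_sin_bound:
  fixes g :: "nat \<Rightarrow> real"
  assumes "2 \<le> K" "\<And>i. i \<le> K \<Longrightarrow> 0 < g i \<and> g i < 2 * pi" "g K = g 0"
    and "(\<Sum>i<K. g i) = 2 * pi"
    and "\<And>i. i < K \<Longrightarrow> 4 * ln (sin (pi / real K))
      \<le> ln (sin (g i / 2)) + ln (sin (g (Suc i) / 2)) + 2 * ln (sin ((g i + g (Suc i)) / 4))"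
    and "i < K"
  shows "g i = 2 * pi / real K"
proof (rule ccontr)
  assume "g i \<noteq> 2 * pi / real K"
  define L :: "real \<Rightarrow> real" where "L y = ln (sin y)" for y
  have shift: "(\<Sum>i<K. h (g (Suc i))) = (\<Sum>i<K. h (g i))" for h :: "real \<Rightarrow> real"
    using sum.lessThan_Suc_shift[of "\<lambda>i. h (g i)" K] sum.lessThan_Suc[of "\<lambda>i. h (g i)" K] assms(3)
    by simp
  have "0 < (g i + g (Suc i)) / 4 \<and> (g i + g (Suc i)) / 4 < pi" if "i < K" for i
    using assms(2)[of i] assms(2)[of "Suc i"] that by auto
  moreover have "(\<Sum>i<K. (g i + g (Suc i)) / 4) = pi"
    using assms(4) shift[of id] by (simp add: sum.distrib flip: sum_divide_distrib)
  ultimately have "(\<Sum>i<K. L ((g i + g (Suc i)) / 4)) \<le> real K * L (pi / real K)"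
    unfolding L_def using sum_ln_sin_le[of "{..<K}" "\<lambda>i. (g i + g (Suc i)) / 4"] by simp
  moreover have "(\<Sum>i<K. 4 * L (pi / real K))
      \<le> (\<Sum>i<K. L (g i / 2) + L (g (Suc i) / 2) + 2 * L ((g i + g (Suc i)) / 4))"
    using assms(5) by (intro sum_mono) (simp add: L_def)
  ultimately have "real K * L (pi / real K) \<le> (\<Sum>i<K. L (g i / 2))"
    using shift[of "\<lambda>y. L (y / 2)"] by (simp add: sum.distrib sum_distrib_left[symmetric])
  moreover have "(\<Sum>i<K. L (g i / 2)) < real K * L (pi / real K)"
    unfolding L_def using assms(2,4,6) \<open>g i \<noteq> 2 * pi / real K\<close>
    by (intro sum_ln_sin_less[where I = "{..<K}" and j = i, simplified])
      (auto simp: field_simps simp flip: sum_divide_distrib)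
  ultimately show False by simp
qed

lemma periodic_angles_of_circle_set:
  fixes P :: "(real^2) set"
  assumes "finite P" "P \<noteq> {}" "\<And>p. p \<in> P \<Longrightarrow> norm p = 1"
  obtains \<theta> where "strict_mono \<theta>" "\<And>i. \<theta> (i + card P) = \<theta> i + 2 * pi"
    "P = (\<lambda>i. circle_point (\<theta> i)) ` {..<card P}"
proof -
  define A where "A = {t. 0 \<le> t \<and> t < 2 * pi \<and> circle_point t \<in> P}"
  have "inj_on circle_point A"
  proof (rule inj_onI)
    fix s t assume "s \<in> A" "t \<in> A" "circle_point s = circle_point t"
    then show "s = t" by (intro circle_point_inj) (auto simp: A_def)
  qed
  moreover have "circle_point ` A = P"
  proof
    show "P \<subseteq> circle_point ` A"
    proof
      fix p assume "p \<in> P"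
      then obtain t where "0 \<le> t" "t < 2 * pi" "p = circle_point t"
        using unit_vector_eq_circle_point assms(3) by metis
      with \<open>p \<in> P\<close> show "p \<in> circle_point ` A" by (auto simp: A_def)
    qed
  qed (auto simp: A_def)
  ultimately have A: "finite A" "card A = card P"
    using assms(1) by (auto simp: finite_image_iff card_image)
  obtain x where x: "A = x ` {..<card P}" "\<And>i j. i < j \<Longrightarrow> j < card P \<Longrightarrow> x i < x j"
    using sorted_enumeration[OF A(1)] A(2) by metis
  have P: "0 < card P" using assms(1,2) by (simp add: card_gt_0_iff)
  have x_range: "0 \<le> x i \<and> x i < 2 * pi" if "i < card P" for i
    using that x(1) by (auto simp: A_def)
  have "x (card P - 1) < x 0 + 2 * pi"
    using x_range[of 0] x_range[of "card P - 1"] P by simp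
  from periodic_strict_mono_extension[of "card P" x "2 * pi", OF P x(2) this]
  obtain \<theta> where \<theta>: "strict_mono \<theta>" "\<And>i. \<theta> (i + card P) = \<theta> i + 2 * pi"
    "\<And>i. i < card P \<Longrightarrow> \<theta> i = x i" by blast
  have "P = circle_point ` x ` {..<card P}"
    using \<open>circle_point ` A = P\<close> x(1) by simp
  also have "\<dots> = (\<lambda>i. circle_point (\<theta> i)) ` {..<card P}"
    using \<theta>(3) by (auto simp: image_image)
  finally show ?thesis using that \<theta>(1,2) by blast
qed

lemma circle_point_periodic_in_image:
  fixes \<theta> :: "nat \<Rightarrow> real"
  assumes "0 < K" "\<And>i. \<theta> (i + K) = \<theta> i + 2 * pi"
  shows "circle_point (\<theta> m) \<in> (\<lambda>i. circle_point (\<theta> i)) ` {..<K}"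
proof (induction m rule: less_induct)
  case (less m)
  show ?case
  proof (cases "m < K")
    case False
    then have "\<theta> m = \<theta> (m - K) + 2 * pi" using assms(2)[of "m - K"] by simp
    moreover have "m - K < m" using False assms(1) by simp
    ultimately show ?thesis using less by simp
  qed simp
qed

lemma periodic_angle_gap_bounds:
  assumes "strict_mono \<theta>" "\<And>i. \<theta> (i + K) = \<theta> i + 2 * pi" "2 \<le> K"
  shows "0 < \<theta> (Suc i) - \<theta> i" "\<theta> (Suc i) - \<theta> i < 2 * pi"
proof -
  show "0 < \<theta> (Suc i) - \<theta> i" using strict_monoD[OF assms(1), of i "Suc i"] by simp
  have "\<theta> (Suc i) < \<theta> (i + K)" using assms(3) by (intro strict_monoD[OF assms(1)]) simp
  then show "\<theta> (Suc i) - \<theta> i < 2 * pi" using assms(2) by simp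
qed

lemma circle_point_consecutive_neq:
  assumes "strict_mono \<theta>" "\<And>i. \<theta> (i + K) = \<theta> i + 2 * pi" "2 \<le> K"
  shows "circle_point (\<theta> (Suc i)) \<noteq> circle_point (\<theta> i)"
  using periodic_angle_gap_bounds[OF assms, of i] circle_point_inj[of "\<theta> (Suc i)" "\<theta> i"]
  by auto

lemma circle_code_gap_bound:
  fixes \<theta> :: "nat \<Rightarrow> real" and j :: nat
  assumes \<theta>: "strict_mono \<theta>" "\<And>i. \<theta> (i + K) = \<theta> i + 2 * pi" "2 \<le> K"
    and P: "P = (\<lambda>i. circle_point (\<theta> i)) ` {..<K}"
    and "0 < c" "\<And>p. p \<in> P \<Longrightarrow> c \<le> infdist p (convex hull (P - {p}))"
  defines "A \<equiv> \<theta> (Suc j) - \<theta> j" and "B \<equiv> \<theta> (Suc (Suc j)) - \<theta> (Suc j)"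
  shows "c * c \<le> 4 * sin (A / 2) * sin (B / 2) * (sin ((A + B) / 4))\<^sup>2"
proof (rule circle_neighbours_gap_bound)
  let ?p = "circle_point (\<theta> (Suc j))"
  have mem: "circle_point (\<theta> m) \<in> P" for m
    unfolding P using \<theta>(2,3) by (intro circle_point_periodic_in_image) auto
  show "finite (P - {?p})" using P by simp
  show "c \<le> infdist ?p (convex hull (P - {?p}))" using assms(6) mem by blast
  show "circle_point (\<theta> (Suc j) - A) \<in> P - {?p}"
    using mem circle_point_consecutive_neq[OF \<theta>, of j] by (auto simp: A_def)
  show "circle_point (\<theta> (Suc j) + B) \<in> P - {?p}"
    using mem circle_point_consecutive_neq[OF \<theta>, of "Suc j"] by (auto simp: B_def)
  show "0 < A" "A < 2 * pi" "0 < B" "B < 2 * pi"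
    unfolding A_def B_def using periodic_angle_gap_bounds[OF \<theta>] by auto
qed (use assms(5) in simp)

lemma angles_of_equal_gaps:
  fixes \<theta> :: "nat \<Rightarrow> real"
  assumes "\<And>i. i < n \<Longrightarrow> \<theta> (Suc i) - \<theta> i = d" "i \<le> n"
  shows "\<theta> i = \<theta> 0 + d * i"
  using assms(2)
proof (induction i)
  case (Suc i)
  then have "\<theta> (Suc i) = \<theta> i + d" using assms(1)[of i] by simp
  with Suc show ?case by (simp add: algebra_simps)
qed simp

lemma regular_polygon_image_shift:
  assumes "0 < K"
  shows "(\<lambda>k. circle_point (2 * pi * real k / real K + \<alpha>)) ` {..<K}
    = (\<lambda>k. circle_point (2 * pi * real k / real K + \<alpha>)) ` {1..K}"
proof -
  have "circle_point (2 * pi * real K / real K + \<alpha>) = circle_point (2 * pi * 0 / real K + \<alpha>)"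
    using assms by (simp add: add.commute)
  moreover have "{..<K} = insert 0 {1..<K}" "{1..K} = insert K {1..<K}" using assms by auto
  ultimately show ?thesis by simp
qed

lemma circle_code_equal_gaps:
  fixes \<theta> :: "nat \<Rightarrow> real"
  assumes \<theta>: "strict_mono \<theta>" "\<And>i. \<theta> (i + K) = \<theta> i + 2 * pi" "2 \<le> K"
    and P: "P = (\<lambda>i. circle_point (\<theta> i)) ` {..<K}"
    and sep: "\<And>p. p \<in> P \<Longrightarrow> 1 - cos (2 * pi / real K) \<le> infdist p (convex hull (P - {p}))"
    and "i < K"
  shows "\<theta> (Suc i) - \<theta> i = 2 * pi / real K"
proof -
  define s c where "s = pi / real K" and "c = 1 - cos (2 * pi / real K)"
  have s: "0 < s" "s < pi" using \<theta>(3) by (auto simp: s_def field_simps)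
  have c: "c = 2 * (sin s)\<^sup>2" using cos_double_sin[of s] by (simp add: c_def s_def)
  with sin_gt_zero[OF s] have "0 < c" by simp
  have sep_c: "c \<le> infdist p (convex hull (P - {p}))" if "p \<in> P" for p
    using sep[OF that] by (simp add: c_def)
  define g where "g i = \<theta> (Suc i) - \<theta> i" for i
  have "g i = 2 * pi / real K"
  proof (rule equal_gaps_of_ln_sin_bound[OF \<theta>(3) _ _ _ _ \<open>i < K\<close>])
    show "0 < g i \<and> g i < 2 * pi" for i
      using periodic_angle_gap_bounds[OF \<theta>] by (simp add: g_def)
    show "g K = g 0" using \<theta>(2)[of 0] \<theta>(2)[of 1] by (simp add: g_def)
    show "(\<Sum>i<K. g i) = 2 * pi"
      using sum_lessThan_telescope[of \<theta> K] \<theta>(2)[of 0] by (simp add: g_def)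
    show "4 * ln (sin (pi / real K))
      \<le> ln (sin (g i / 2)) + ln (sin (g (Suc i) / 2)) + 2 * ln (sin ((g i + g (Suc i)) / 4))" for i
      using circle_code_gap_bound[OF \<theta> P \<open>0 < c\<close> sep_c, of i] s periodic_angle_gap_bounds[OF \<theta>]
      by (intro ln_sin_form_of_gap_bound[of s, unfolded s_def]) (simp_all add: g_def c s_def)
  qed
  then show ?thesis by (simp add: g_def)
qed

lemma circle_code_regular:
  fixes W :: "nat \<Rightarrow> real^2"
  assumes "oblique K W" "2 \<le> K" "1 - cos (2 * pi / real K) \<le> rho_ovr K W"
  shows "\<exists>\<alpha>. W ` {..<K} = (\<lambda>k. circle_point (2 * pi * real k / real K + \<alpha>)) ` {1..K}"
proof -
  have "0 < 2 * pi / real K" "2 * pi / real K \<le> pi" using assms(2) by (simp_all add: field_simps)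
  then have "0 < 1 - cos (2 * pi / real K)" using cos_monotone_0_pi[of 0 "2 * pi / real K"] by simp
  with assms(3) have inj: "inj_on W {..<K}" by (intro inj_on_of_rho_ovr_pos) simp
  define P where "P = W ` {..<K}"
  have sep: "1 - cos (2 * pi / real K) \<le> infdist p (convex hull (P - {p}))" if "p \<in> P" for p
    using assms(3) rho_ovr_le_infdist_remove[OF inj, of p] that by (simp add: P_def)
  have "W 0 \<in> P" using assms(2) by (simp add: P_def)
  then have "finite P" "P \<noteq> {}" "\<And>p. p \<in> P \<Longrightarrow> norm p = 1"
    using assms(1) by (auto simp: P_def oblique_def)
  from periodic_angles_of_circle_set[OF this]
  obtain \<theta> where \<theta>: "strict_mono \<theta>" "\<And>i. \<theta> (i + K) = \<theta> i + 2 * pi"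
    "P = (\<lambda>i. circle_point (\<theta> i)) ` {..<K}"
    using inj by (auto simp: P_def card_image)
  define \<alpha> where "\<alpha> = \<theta> 0"
  have "\<theta> i = 2 * pi * real i / real K + \<alpha>" if "i < K" for i
    using angles_of_equal_gaps[of K \<theta> "2 * pi / real K" i] that
      circle_code_equal_gaps[OF \<theta>(1,2) assms(2) \<theta>(3) sep]
    by (simp add: \<alpha>_def)
  then have "P = (\<lambda>k. circle_point (2 * pi * real k / real K + \<alpha>)) ` {..<K}"
    unfolding \<theta>(3) by (intro image_cong) simp_all
  then show ?thesis
    using regular_polygon_image_shift[of K] assms(2) by (auto simp: P_def)
qed

lemma softmax_code_circle:
  fixes W :: "nat \<Rightarrow> real^2"
  assumes "softmax_code K W" "2 \<le> K"
  shows "\<exists>\<alpha>. W ` {..<K} = (\<lambda>k. circle_point (2 * pi * real k / real K + \<alpha>)) ` {1..K}"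
proof (rule circle_code_regular)
  show "oblique K W" using assms(1) by (simp add: softmax_code_def)
  have "oblique K (\<lambda>k. circle_point (2 * pi * real k / real K))" by (simp add: oblique_def)
  then show "1 - cos (2 * pi / real K) \<le> rho_ovr K W"
    using rho_ovr_regular_polygon[OF assms(2)] softmax_code_rho_ovr_ge[OF assms(1)] by fastforce
qed (use assms(2) in simp)

theorem mainTheorem4:
  fixes K :: nat
  assumes K2: "K \<ge> 2"
  shows
   "(\<forall>W :: nat \<Rightarrow> real^2. softmax_code K W \<longrightarrow>
       (\<exists>\<alpha>::real. W ` {..<K} =
          (\<lambda>k. vector [cos (2*pi*real k / real K + \<alpha>), sin (2*pi*real k / real K + \<alpha>)])
            ` {1..K}))
    \<and> (\<forall>W :: nat \<Rightarrow> real^'n. softmax_code K W \<longrightarrow> K \<le> CARD('n) + 1 \<longrightarrow>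
         (\<forall>k<K. \<forall>k'<K. k \<noteq> k' \<longrightarrow> W k \<bullet> W k' = - 1 / (real K - 1)))
    \<and> (\<forall>W :: nat \<Rightarrow> real^'n. softmax_code K W \<longrightarrow> CARD('n) + 1 < K \<longrightarrow> K \<le> 2 * CARD('n) \<longrightarrow>
         rho_ovr K W = 1
         \<and> (\<forall>V :: nat \<Rightarrow> real^'n. inj_on V {..<K} \<longrightarrow>
              (\<forall>k<K. \<exists>i. V k = axis i 1 \<or> V k = - axis i 1) \<longrightarrow> rho_ovr K V = 1))"
proof (intro conjI allI impI)
  fix W :: "nat \<Rightarrow> real^2"
  assume "softmax_code K W"
  from softmax_code_circle[OF this K2]
  show "\<exists>\<alpha>. W ` {..<K} =
      (\<lambda>k. vector [cos (2*pi*real k / real K + \<alpha>), sin (2*pi*real k / real K + \<alpha>)]) ` {1..K}"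
    by (simp add: circle_point_def)
next
  fix W :: "nat \<Rightarrow> real^'n" and k k'
  assume "softmax_code K W" "K \<le> CARD('n) + 1" "k < K" "k' < K" "k \<noteq> k'"
  then show "W k \<bullet> W k' = - 1 / (real K - 1)"
    using softmax_code_inner_eq K2 by blast
next
  fix W :: "nat \<Rightarrow> real^'n"
  assume "softmax_code K W" "CARD('n) + 1 < K" "K \<le> 2 * CARD('n)"
  then show "rho_ovr K W = 1" by (intro softmax_code_rho_ovr_eq_one) auto
next
  fix W V :: "nat \<Rightarrow> real^'n"
  assume "CARD('n) + 1 < K" "inj_on V {..<K}" "\<forall>k<K. \<exists>i. V k = axis i 1 \<or> V k = - axis i 1"
  then show "rho_ovr K V = 1"
    by (intro rho_ovr_cross_polytope) (auto simp: cross_polytope_vertex_def)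
qed

end
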